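(* Let $n\ge1$ be an integer and let $k\in\mathbb{R}\setminus C_n$. Then there is a unique pair $(a,b)\in\mathbb{R}^2$ with $(a,b)\neq(0,0)$ satisfying both $S^{(a,b)}_{k,n+1}+S^{(a,b)}_{k,n}=bk+2b+a$ and $4a^3+27b^2=0$; namely $a=-\frac{27(P_n(k)-1)^2}{4(Q_n(k)-k-2)^2}$, $b=\frac{27(P_n(k)-1)^3}{4(Q_n(k)-k-2)^3}$.
   Context: For real $k,a,b$, the generalized $k$-FL sequence is $S^{(a,b)}_{k,0}=2b$, $S^{(a,b)}_{k,1}=bk+a$, $S^{(a,b)}_{k,m}=kS^{(a,b)}_{k,m-1}+S^{(a,b)}_{k,m-2}$ ($m\ge2$). Define $f_m,g_m\in\mathbb{Z}[T]$ by $f_0=0,f_1=1,g_0=2,g_1=T$, $f_m=Tf_{m-1}+f_{m-2}$, $g_m=Tg_{m-1}+g_{m-2}$, and set $P_n=f_{n+1}+f_n$, $Q_n=g_{n+1}+g_n$, so that $S^{(a,b)}_{k,n+1}+S^{(a,b)}_{k,n}=P_n(k)a+Q_n(k)b$. Let $C_n=\{k\in\mathbb{R}: P_n(k)-1=0 \text{ or } Q_n(k)-k-2=0\}$. *)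

theory Defs
  imports "HOL-Computational_Algebra.Polynomial"
begin

text \<open>Generalized k-FL sequence S^{(a,b)}_{k,m}, written FL k a b m.\<close>
fun FL :: "real \<Rightarrow> real \<Rightarrow> real \<Rightarrow> nat \<Rightarrow> real" where
  "FL k a b 0 = 2 * b"
| "FL k a b (Suc 0) = b * k + a"
| "FL k a b (Suc (Suc m)) = k * FL k a b (Suc m) + FL k a b m"

fun fpoly :: "nat \<Rightarrow> int poly" where
  "fpoly 0 = 0"
| "fpoly (Suc 0) = 1"
| "fpoly (Suc (Suc m)) = [:0, 1:] * fpoly (Suc m) + fpoly m"

fun gpoly :: "nat \<Rightarrow> int poly" where
  "gpoly 0 = [:2:]"
| "gpoly (Suc 0) = [:0, 1:]"
| "gpoly (Suc (Suc m)) = [:0, 1:] * gpoly (Suc m) + gpoly m"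

definition Ppoly :: "nat \<Rightarrow> int poly" where
  "Ppoly n = fpoly (n + 1) + fpoly n"

definition Qpoly :: "nat \<Rightarrow> int poly" where
  "Qpoly n = gpoly (n + 1) + gpoly n"

definition evalR :: "int poly \<Rightarrow> real \<Rightarrow> real" where
  "evalR p k = poly (map_poly of_int p) k"

definition Cset :: "nat \<Rightarrow> real set" where
  "Cset n = {k. evalR (Ppoly n) k - 1 = 0 \<or> evalR (Qpoly n) k - k - 2 = 0}"

end

theory Submission imports Defs begin

text \<open>Both sides of the equation are linear in \<open>(a, b)\<close>, so the condition on the
  sequence says that \<open>(a, b)\<close> lies on the line \<open>(P\<^sub>n(k) - 1) a + (Q\<^sub>n(k) - k - 2) b = 0\<close>.
  Off \<open>C\<^sub>n\<close> this line is neither axis, and it meets the cuspidal cubic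
  \<open>4a\<^sup>3 + 27b\<^sup>2 = 0\<close> in the cusp \<open>(0, 0)\<close> and in exactly one further point.\<close>

lemma evalR_add: "evalR (p + q) k = evalR p k + evalR q k"
proof -
  have "map_poly (of_int :: int \<Rightarrow> real) (p + q) = map_poly of_int p + map_poly of_int q"
    by (intro poly_eqI) (simp add: coeff_map_poly)
  then show ?thesis unfolding evalR_def by simp
qed

lemma evalR_pCons_0: "evalR (pCons 0 p) k = k * evalR p k"
  unfolding evalR_def by (simp add: map_poly_pCons)

lemma FL_eq_evalR: "FL k a b m = evalR (fpoly m) k * a + evalR (gpoly m) k * b"
proof (induction k a b m rule: FL.induct)
  case (1 k a b)
  then show ?case by (simp add: evalR_def map_poly_pCons)
next
  case (2 k a b)
  then show ?case by (simp add: evalR_def map_poly_pCons)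
next
  case (3 k a b m)
  then show ?case by (simp add: evalR_add evalR_pCons_0 algebra_simps)
qed

lemma FL_Suc_add_FL: "FL k a b (n + 1) + FL k a b n = evalR (Ppoly n) k * a + evalR (Qpoly n) k * b"
  unfolding FL_eq_evalR Ppoly_def Qpoly_def evalR_add by (simp add: algebra_simps)

lemma line_cusp_intersection_iff:
  fixes p q a b :: real
  assumes "p \<noteq> 0" and "q \<noteq> 0"
  shows "((a, b) \<noteq> (0, 0) \<and> p * a + q * b = 0 \<and> 4 * a ^ 3 + 27 * b ^ 2 = 0)
     \<longleftrightarrow> a = - (27 * p ^ 2) / (4 * q ^ 2) \<and> b = (27 * p ^ 3) / (4 * q ^ 3)"
proof
  assume "(a, b) \<noteq> (0, 0) \<and> p * a + q * b = 0 \<and> 4 * a ^ 3 + 27 * b ^ 2 = 0"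
  then have nonzero: "(a, b) \<noteq> (0, 0)" and line: "p * a + q * b = 0"
    and cubic: "4 * a ^ 3 + 27 * b ^ 2 = 0" by auto
  have a_eq: "a = - (q * b) / p" using line \<open>p \<noteq> 0\<close> by (simp add: field_simps)
  have "b \<noteq> 0" using nonzero a_eq by auto
  have "b ^ 2 * (27 * p ^ 3 - 4 * q ^ 3 * b) = p ^ 3 * (4 * a ^ 3 + 27 * b ^ 2)"
    using \<open>p \<noteq> 0\<close> by (simp add: a_eq field_simps power2_eq_square power3_eq_cube)
  then have "27 * p ^ 3 - 4 * q ^ 3 * b = 0" using cubic \<open>b \<noteq> 0\<close> by simp
  then have b_eq: "b = (27 * p ^ 3) / (4 * q ^ 3)" using \<open>q \<noteq> 0\<close> by (simp add: field_simps)
  show "a = - (27 * p ^ 2) / (4 * q ^ 2) \<and> b = (27 * p ^ 3) / (4 * q ^ 3)"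
    using assms by (simp add: a_eq b_eq field_simps power2_eq_square power3_eq_cube)
next
  assume "a = - (27 * p ^ 2) / (4 * q ^ 2) \<and> b = (27 * p ^ 3) / (4 * q ^ 3)"
  then have a_eq: "a = - (27 * p ^ 2) / (4 * q ^ 2)" and b_eq: "b = (27 * p ^ 3) / (4 * q ^ 3)"
    by auto
  have "b \<noteq> 0" using assms by (simp add: b_eq)
  moreover have "p * a + q * b = 0" using assms
    by (simp add: a_eq b_eq field_simps power2_eq_square power3_eq_cube)
  moreover have "4 * a ^ 3 + 27 * b ^ 2 = 0" using assms
    by (simp add: a_eq b_eq field_simps power2_eq_square power3_eq_cube)
  ultimately show "(a, b) \<noteq> (0, 0) \<and> p * a + q * b = 0 \<and> 4 * a ^ 3 + 27 * b ^ 2 = 0"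
    by simp
qed

theorem lemma3p7:
  fixes n :: nat and k :: real
  assumes "n \<ge> 1" and "k \<notin> Cset n"
  shows "(\<exists>!p :: real \<times> real. p \<noteq> (0, 0)
            \<and> FL k (fst p) (snd p) (n + 1) + FL k (fst p) (snd p) n
                = snd p * k + 2 * snd p + fst p
            \<and> 4 * fst p ^ 3 + 27 * snd p ^ 2 = 0)
       \<and> (let a = - (27 * (evalR (Ppoly n) k - 1) ^ 2) / (4 * (evalR (Qpoly n) k - k - 2) ^ 2);
              b = (27 * (evalR (Ppoly n) k - 1) ^ 3) / (4 * (evalR (Qpoly n) k - k - 2) ^ 3)
          in (a, b) \<noteq> (0, 0)
             \<and> FL k a b (n + 1) + FL k a b n = b * k + 2 * b + a
             \<and> 4 * a ^ 3 + 27 * b ^ 2 = 0)"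
proof -
  define p where "p = evalR (Ppoly n) k - 1"
  define q where "q = evalR (Qpoly n) k - k - 2"
  define a0 where "a0 = - (27 * p ^ 2) / (4 * q ^ 2)"
  define b0 where "b0 = (27 * p ^ 3) / (4 * q ^ 3)"
  have "p \<noteq> 0" and "q \<noteq> 0"
    using assms(2) unfolding Cset_def p_def q_def by auto
  have characterization:
    "(x \<noteq> (0, 0) \<and> FL k (fst x) (snd x) (n + 1) + FL k (fst x) (snd x) n
        = snd x * k + 2 * snd x + fst x \<and> 4 * fst x ^ 3 + 27 * snd x ^ 2 = 0) \<longleftrightarrow> x = (a0, b0)"
    for x :: "real \<times> real"
  proof -
    obtain a b where x: "x = (a, b)" by (cases x)
    have "FL k a b (n + 1) + FL k a b n = b * k + 2 * b + a \<longleftrightarrow> p * a + q * b = 0"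
      unfolding FL_Suc_add_FL p_def q_def by (auto simp: algebra_simps)
    then show ?thesis
      using line_cusp_intersection_iff[OF \<open>p \<noteq> 0\<close> \<open>q \<noteq> 0\<close>, of a b]
      unfolding x a0_def b0_def by simp
  qed
  show ?thesis
    unfolding Let_def p_def[symmetric] q_def[symmetric] a0_def[symmetric] b0_def[symmetric]
    using characterization[of "(a0, b0)"] characterization by auto
qed

end
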